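(* Let $r$ and $t$ be positive integers with $r\ge 3$ and $2\le t\le \frac{r+3}{3}$, and let $n=3r-t$. If $\rho_2(K(n,r))\ge 4$, then there exists a $2$-packing $S$ of $K(n,r)$ with $|S|=4$ such that $i_x(S)\le 2$ for every $x\in[n]$.
   Context: For integers $n\ge 2r$, the Kneser graph $K(n,r)$ has as vertices the $r$-element subsets of $[n]=\{1,\dots,n\}$, two vertices being adjacent iff they are disjoint. A $2$-packing of a graph $G$ is a set of vertices pairwise at distance at least $3$ in $G$; $\rho_2(G)$ is the maximum cardinality of a $2$-packing. For a set $S$ of vertices of $K(n,r)$ and $x\in[n]$, $i_x(S)=|\{u\in S: x\in u\}|$ is the number of vertices of $S$ containing $x$. *)

theory Defs
  imports Main
begin

definition kneser_vertices :: "nat \<Rightarrow> nat \<Rightarrow> nat set set" where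
  "kneser_vertices n r = {u. u \<subseteq> {1..n} \<and> card u = r}"

text \<open>Adjacency: two vertices are adjacent iff disjoint (vertices are nonempty when r >= 1,
  so this is irreflexive).\<close>
definition kneser_adj :: "nat \<Rightarrow> nat \<Rightarrow> nat set \<Rightarrow> nat set \<Rightarrow> bool" where
  "kneser_adj n r u v \<longleftrightarrow> u \<in> kneser_vertices n r \<and> v \<in> kneser_vertices n r \<and> u \<inter> v = {}"

definition kneser_walk :: "nat \<Rightarrow> nat \<Rightarrow> nat set \<Rightarrow> nat set \<Rightarrow> nat \<Rightarrow> bool" where
  "kneser_walk n r u v k \<longleftrightarrow>
     (\<exists>p :: nat \<Rightarrow> nat set. p 0 = u \<and> p k = v \<and> (\<forall>i\<le>k. p i \<in> kneser_vertices n r)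
        \<and> (\<forall>i<k. kneser_adj n r (p i) (p (Suc i))))"

definition kneser_dist_ge :: "nat \<Rightarrow> nat \<Rightarrow> nat set \<Rightarrow> nat set \<Rightarrow> nat \<Rightarrow> bool" where
  "kneser_dist_ge n r u v d \<longleftrightarrow> (\<forall>k<d. \<not> kneser_walk n r u v k)"

definition two_packing :: "nat \<Rightarrow> nat \<Rightarrow> nat set set \<Rightarrow> bool" where
  "two_packing n r S \<longleftrightarrow> S \<subseteq> kneser_vertices n r \<and>
     (\<forall>u\<in>S. \<forall>v\<in>S. u \<noteq> v \<longrightarrow> kneser_dist_ge n r u v 3)"

text \<open>rho_2(K(n,r)): maximum cardinality of a 2-packing (the vertex set is finite).\<close>
definition rho2 :: "nat \<Rightarrow> nat \<Rightarrow> nat" where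
  "rho2 n r = Max (card ` {S. two_packing n r S})"

definition i_x :: "nat set set \<Rightarrow> nat \<Rightarrow> nat" where
  "i_x S x = card {u\<in>S. x \<in> u}"

end

theory Submission
  imports Defs
begin

(* Two distinct r-subsets u, v of [n] are at distance at least 3 in K(n,r) iff they meet and
   have no common neighbour, i.e. iff 0 < |u Int v| < 3r - n = t.  For four such sets the
   Bonferroni inequality gives 4r <= |u1 Un ... Un u4| + sum of the six |ui Int uj| <= n + 6(t - 1),
   that is r + 6 <= 5t.  Conversely, if r + 6 <= 5t, put disjoint blocks of size t - 1 on the six
   edges of K4 and blocks of size r - 3(t - 1) on its four vertices, and let the i-th set consist
   of the blocks at vertex i and at the three edges through i.  These four r-sets fit into [n],
   pairwise meet in a single edge block, and no point lies in three of them. *)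

lemma finite_kneser_vertices: "finite (kneser_vertices n r)"
  by (rule finite_subset[of _ "Pow {1..n}"]) (auto simp: kneser_vertices_def)

lemma kneser_vertex_finite: "u \<in> kneser_vertices n r \<Longrightarrow> finite u"
  by (auto simp: kneser_vertices_def intro: finite_subset)

lemma kneser_walk_0_iff: "kneser_walk n r u v 0 \<longleftrightarrow> u = v \<and> u \<in> kneser_vertices n r"
  by (auto simp: kneser_walk_def)

lemma kneser_walk_1_iff: "kneser_walk n r u v 1 \<longleftrightarrow> kneser_adj n r u v"
proof
  assume "kneser_adj n r u v"
  then show "kneser_walk n r u v 1"
    unfolding kneser_walk_def
    by (intro exI[of _ "\<lambda>i. if i = 0 then u else v"]) (auto simp: kneser_adj_def le_Suc_eq)
qed (auto simp: kneser_walk_def)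

lemma kneser_walk_2_iff:
  "kneser_walk n r u v 2 \<longleftrightarrow> (\<exists>w. kneser_adj n r u w \<and> kneser_adj n r w v)"
proof
  assume "kneser_walk n r u v 2"
  then obtain p where p: "p 0 = u" "p 2 = v" "\<forall>i<2. kneser_adj n r (p i) (p (Suc i))"
    unfolding kneser_walk_def by blast
  have "kneser_adj n r (p 0) (p 1)" "kneser_adj n r (p 1) (p 2)"
    using p(3)[rule_format, of 0] p(3)[rule_format, of 1] by (simp_all add: numeral_2_eq_2)
  then show "\<exists>w. kneser_adj n r u w \<and> kneser_adj n r w v"
    using p(1,2) by blast
next
  assume "\<exists>w. kneser_adj n r u w \<and> kneser_adj n r w v"
  then obtain w where "kneser_adj n r u w" "kneser_adj n r w v" by blast
  then show "kneser_walk n r u v 2"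
    unfolding kneser_walk_def
    by (intro exI[of _ "\<lambda>i. if i = 0 then u else if i = 1 then w else v"])
      (auto simp: kneser_adj_def le_Suc_eq less_Suc_eq numeral_2_eq_2)
qed

lemma kneser_common_neighbour_iff:
  assumes "u \<in> kneser_vertices n r" "v \<in> kneser_vertices n r"
  shows "(\<exists>w. kneser_adj n r u w \<and> kneser_adj n r w v) \<longleftrightarrow> r + card (u \<union> v) \<le> n"
proof -
  have sub: "u \<union> v \<subseteq> {1..n}" using assms by (auto simp: kneser_vertices_def)
  have "kneser_adj n r u w \<and> kneser_adj n r w v \<longleftrightarrow> w \<subseteq> {1..n} - (u \<union> v) \<and> card w = r"
    for w
    using assms unfolding kneser_adj_def kneser_vertices_def by blast
  then have "(\<exists>w. kneser_adj n r u w \<and> kneser_adj n r w v) \<longleftrightarrow>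
      (\<exists>w \<subseteq> {1..n} - (u \<union> v). card w = r)"
    by auto
  also have "\<dots> \<longleftrightarrow> r \<le> card ({1..n} - (u \<union> v))"
    by (metis card_mono finite_Diff finite_atLeastAtMost obtain_subset_with_card_n)
  also have "\<dots> \<longleftrightarrow> r + card (u \<union> v) \<le> n"
    using card_Diff_subset[OF finite_subset[OF sub] sub] card_mono[OF _ sub] by (simp add: le_diff_conv2)
  finally show ?thesis .
qed

lemma kneser_dist_ge_3_iff:
  assumes "u \<in> kneser_vertices n r" "v \<in> kneser_vertices n r"
  shows "kneser_dist_ge n r u v 3 \<longleftrightarrow> u \<noteq> v \<and> u \<inter> v \<noteq> {} \<and> n + card (u \<inter> v) < 3 * r"
proof -
  have "kneser_dist_ge n r u v 3 \<longleftrightarrow>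
      \<not> kneser_walk n r u v 0 \<and> \<not> kneser_walk n r u v 1 \<and> \<not> kneser_walk n r u v 2"
    by (auto simp: kneser_dist_ge_def numeral_3_eq_3 numeral_2_eq_2 less_Suc_eq)
  moreover have "kneser_walk n r u v 0 \<longleftrightarrow> u = v"
    using assms(1) by (simp add: kneser_walk_0_iff)
  moreover have "kneser_walk n r u v 1 \<longleftrightarrow> u \<inter> v = {}"
    unfolding kneser_walk_1_iff kneser_adj_def using assms by simp
  moreover have "card (u \<union> v) + card (u \<inter> v) = 2 * r"
    using assms card_Un_Int[OF kneser_vertex_finite[OF assms(1)] kneser_vertex_finite[OF assms(2)]]
    by (simp add: kneser_vertices_def)
  then have "kneser_walk n r u v 2 \<longleftrightarrow> 3 * r \<le> n + card (u \<inter> v)"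
    unfolding kneser_walk_2_iff kneser_common_neighbour_iff[OF assms] by linarith
  ultimately show ?thesis
    by (simp add: not_le)
qed

lemma two_packing_iff:
  "two_packing n r S \<longleftrightarrow> S \<subseteq> kneser_vertices n r \<and>
     (\<forall>u\<in>S. \<forall>v\<in>S. u \<noteq> v \<longrightarrow> u \<inter> v \<noteq> {} \<and> n + card (u \<inter> v) < 3 * r)"
  unfolding two_packing_def by (metis (no_types) kneser_dist_ge_3_iff subsetD)

lemma two_packing_subset: "two_packing n r S \<Longrightarrow> T \<subseteq> S \<Longrightarrow> two_packing n r T"
  unfolding two_packing_def by blast

lemma rho2_attained: "\<exists>S. two_packing n r S \<and> card S = rho2 n r"
proof -
  have "finite {S. two_packing n r S}"
    by (rule finite_subset[of _ "Pow (kneser_vertices n r)"])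
      (auto simp: two_packing_def finite_kneser_vertices)
  moreover have "two_packing n r {}"
    by (simp add: two_packing_def)
  ultimately have "rho2 n r \<in> card ` {S. two_packing n r S}"
    unfolding rho2_def by (intro Max_in) auto
  then show ?thesis by auto
qed

lemma pair_subsets_insert:
  assumes "a \<notin> S"
  shows "{P. P \<subseteq> insert a S \<and> card P = 2} = {P. P \<subseteq> S \<and> card P = 2} \<union> (\<lambda>B. {a, B}) ` S"
proof (intro equalityI subsetI)
  fix P assume "P \<in> {P. P \<subseteq> insert a S \<and> card P = 2}"
  then obtain x y where "P = {x, y}" "x \<noteq> y" "P \<subseteq> insert a S"
    by (auto simp: card_2_iff)
  then show "P \<in> {P. P \<subseteq> S \<and> card P = 2} \<union> (\<lambda>B. {a, B}) ` S"
    by (auto simp: insert_commute)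
next
  fix P assume "P \<in> {P. P \<subseteq> S \<and> card P = 2} \<union> (\<lambda>B. {a, B}) ` S"
  then show "P \<in> {P. P \<subseteq> insert a S \<and> card P = 2}"
  proof
    assume "P \<in> (\<lambda>B. {a, B}) ` S"
    then obtain B where "P = {a, B}" "B \<in> S" by blast
    moreover have "a \<noteq> B" using assms \<open>B \<in> S\<close> by blast
    ultimately show ?thesis by simp
  qed auto
qed

lemma sum_card_le_card_Union_plus_pair_Int:
  assumes "finite S" "\<forall>A\<in>S. finite A"
  shows "(\<Sum>A\<in>S. card A) \<le> card (\<Union>S) + (\<Sum>P | P \<subseteq> S \<and> card P = 2. card (\<Inter>P))"
  using assms
proof (induction S rule: finite_induct)
  case empty
  then show ?case by simp
next
  case (insert a S)
  let ?pairs = "\<lambda>S. {P. P \<subseteq> S \<and> card P = 2}"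
  have fin: "finite a" "finite (\<Union>S)" using insert by auto
  have "inj_on (\<lambda>B. {a, B}) S"
    using insert.hyps(2) by (auto simp: inj_on_def doubleton_eq_iff)
  then have new_pairs: "(\<Sum>P\<in>(\<lambda>B. {a, B}) ` S. card (\<Inter>P)) = (\<Sum>B\<in>S. card (a \<inter> B))"
    by (simp add: sum.reindex)
  have "(\<Sum>P\<in>?pairs (insert a S). card (\<Inter>P))
        = (\<Sum>P\<in>?pairs S. card (\<Inter>P)) + (\<Sum>B\<in>S. card (a \<inter> B))"
    unfolding pair_subsets_insert[OF insert.hyps(2)] new_pairs[symmetric]
    using insert.hyps by (intro sum.union_disjoint) auto
  moreover have "card a + card (\<Union>S) = card (a \<union> \<Union>S) + card (a \<inter> \<Union>S)"
    using card_Un_Int fin by blast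
  moreover have "card (a \<inter> \<Union>S) \<le> (\<Sum>B\<in>S. card (a \<inter> B))"
    unfolding Int_Union by (rule card_UN_le[OF insert.hyps(1)])
  moreover have "(\<Sum>A\<in>S. card A) \<le> card (\<Union>S) + (\<Sum>P\<in>?pairs S. card (\<Inter>P))"
    using insert.IH insert.prems by blast
  ultimately show ?case
    using insert.hyps by (simp add: sum.insert)
qed

lemma two_packing_card_bound:
  assumes "two_packing n r S"
  shows "card S * r \<le> n + (card S choose 2) * (3 * r - Suc n)"
proof -
  have S: "S \<subseteq> kneser_vertices n r" "finite S"
    using assms finite_subset[OF _ finite_kneser_vertices] by (auto simp: two_packing_def)
  have "card S * r = (\<Sum>u\<in>S. card u)"
    using S(1) by (simp add: kneser_vertices_def subset_iff)
  also have "\<dots> \<le> card (\<Union>S) + (\<Sum>P | P \<subseteq> S \<and> card P = 2. card (\<Inter>P))"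
    using S by (intro sum_card_le_card_Union_plus_pair_Int) (auto intro: kneser_vertex_finite)
  also have "card (\<Union>S) \<le> n"
    using S(1) card_mono[of "{1..n}" "\<Union>S"] by (auto simp: kneser_vertices_def)
  also have "(\<Sum>P | P \<subseteq> S \<and> card P = 2. card (\<Inter>P)) \<le> (card S choose 2) * (3 * r - Suc n)"
  proof -
    have pair: "n + card (u \<inter> v) < 3 * r" if "u \<in> S" "v \<in> S" "u \<noteq> v" for u v
      using assms that unfolding two_packing_iff by blast
    have "card (\<Inter>P) \<le> 3 * r - Suc n" if "P \<subseteq> S" "card P = 2" for P
    proof -
      obtain u v where "P = {u, v}" "u \<noteq> v" using \<open>card P = 2\<close> by (auto simp: card_2_iff)
      moreover have "u \<in> S" "v \<in> S" using \<open>P \<subseteq> S\<close> \<open>P = {u, v}\<close> by auto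
      ultimately show ?thesis using pair[of u v] by simp
    qed
    then show ?thesis
      using sum_bounded_above[of "{P. P \<subseteq> S \<and> card P = 2}" "\<lambda>P. card (\<Inter>P)"]
      by (simp add: n_subsets S(2))
  qed
  finally show ?thesis by simp
qed

lemma i_x_le_2I:
  assumes "\<And>u v w. u \<in> S \<Longrightarrow> v \<in> S \<Longrightarrow> w \<in> S \<Longrightarrow> u \<noteq> v \<Longrightarrow> u \<noteq> w \<Longrightarrow> v \<noteq> w
    \<Longrightarrow> x \<notin> u \<inter> v \<inter> w"
  shows "i_x S x \<le> 2"
proof (rule ccontr)
  assume "\<not> i_x S x \<le> 2"
  then have "3 \<le> card {u \<in> S. x \<in> u}"
    unfolding i_x_def by simp
  then obtain T where T: "T \<subseteq> {u \<in> S. x \<in> u}" "card T = 3"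
    by (meson obtain_subset_with_card_n)
  then obtain u v w where "T = {u, v, w}" "u \<noteq> v" "v \<noteq> w" "u \<noteq> w"
    unfolding card_3_iff by blast
  then show False
    using T(1) assms[of u v w] by blast
qed

lemma UN_Int_UN_disjoint:
  assumes "\<And>k l. k \<noteq> l \<Longrightarrow> B k \<inter> B l = {}"
  shows "(\<Union>k\<in>I. B k) \<inter> (\<Union>k\<in>J. B k) = (\<Union>k\<in>I \<inter> J. B k)"
proof (intro equalityI subsetI)
  fix x assume "x \<in> (\<Union>k\<in>I. B k) \<inter> (\<Union>k\<in>J. B k)"
  then obtain k l where "k \<in> I" "l \<in> J" "x \<in> B k" "x \<in> B l" by blast
  moreover from this have "k = l" using assms by blast
  ultimately show "x \<in> (\<Union>k\<in>I \<inter> J. B k)" by blast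
qed blast

lemma consecutive_intervals_disjoint:
  fixes b :: "nat \<Rightarrow> nat"
  assumes "mono b" "k \<noteq> l"
  shows "{b k..<b (Suc k)} \<inter> {b l..<b (Suc l)} = {}"
proof -
  have "{b k..<b (Suc k)} \<inter> {b l..<b (Suc l)} = {}" if "k < l" for k l
    using monoD[OF assms(1), of "Suc k" l] that by auto
  then show ?thesis
    using assms(2) by (metis Int_commute linorder_neqE_nat)
qed

definition block_start :: "nat \<Rightarrow> nat \<Rightarrow> nat \<Rightarrow> nat" where
  "block_start m q k = 1 + min k 6 * m + (k - 6) * q"

definition block :: "nat \<Rightarrow> nat \<Rightarrow> nat \<Rightarrow> nat set" where
  "block m q k = {block_start m q k..<block_start m q (Suc k)}"

(* Blocks 0..5 (of size m) stand for the six edges of K4 and block 6 + i (of size q) is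
   private to vertex i, so two K4 vertices share exactly one block and no three share one. *)
definition K4_blocks :: "nat set list" where
  "K4_blocks = [{0, 1, 2, 6}, {0, 3, 4, 7}, {1, 3, 5, 8}, {2, 4, 5, 9}]"

definition K4_vertex :: "nat \<Rightarrow> nat \<Rightarrow> nat \<Rightarrow> nat set" where
  "K4_vertex m q i = (\<Union>k\<in>K4_blocks ! i. block m q k)"

lemma mono_block_start: "mono (block_start m q)"
proof (rule monoI)
  fix k l :: nat assume "k \<le> l"
  then show "block_start m q k \<le> block_start m q l"
    unfolding block_start_def by (intro add_mono mult_le_mono1) auto
qed

lemma block_disjoint: "k \<noteq> l \<Longrightarrow> block m q k \<inter> block m q l = {}"
  unfolding block_def by (rule consecutive_intervals_disjoint[OF mono_block_start])

lemma card_block: "card (block m q k) = (if k < 6 then m else q)"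
proof (cases "k < 6")
  case True
  then have "block_start m q k = 1 + k * m" "block_start m q (Suc k) = 1 + Suc k * m"
    by (simp_all add: block_start_def)
  then show ?thesis using True by (simp add: block_def)
next
  case False
  then have "k - 5 = Suc (k - 6)" by arith
  then have "block_start m q (Suc k) = block_start m q k + q"
    using False by (simp add: block_start_def)
  then show ?thesis using False by (simp add: block_def)
qed

lemma block_subset: "k < 10 \<Longrightarrow> block m q k \<subseteq> {1..6 * m + 4 * q}"
  using monoD[OF mono_block_start, of "Suc k" 10 m q]
  by (auto simp: block_def block_start_def)

lemma less_4_cases: "i < 4 \<Longrightarrow> i = 0 \<or> i = 1 \<or> i = 2 \<or> i = (3::nat)"
  by auto

lemma K4_blocks_subset: "i < 4 \<Longrightarrow> K4_blocks ! i \<subseteq> {..<10}"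
  by (elim less_4_cases[elim_format] disjE) (simp_all add: K4_blocks_def)

lemma K4_blocks_pair:
  "i < 4 \<Longrightarrow> j < 4 \<Longrightarrow> i \<noteq> j \<Longrightarrow>
    card (K4_blocks ! i \<inter> K4_blocks ! j) = 1 \<and> K4_blocks ! i \<inter> K4_blocks ! j \<subseteq> {..<6}"
  by (elim less_4_cases[elim_format] disjE) (simp_all add: K4_blocks_def)

lemma K4_blocks_triple:
  "i < 4 \<Longrightarrow> j < 4 \<Longrightarrow> k < 4 \<Longrightarrow> i \<noteq> j \<Longrightarrow> i \<noteq> k \<Longrightarrow> j \<noteq> k \<Longrightarrow>
    K4_blocks ! i \<inter> K4_blocks ! j \<inter> K4_blocks ! k = {}"
  by (elim less_4_cases[elim_format] disjE) (simp_all add: K4_blocks_def)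

lemma K4_blocks_weight:
  fixes m q :: nat
  shows "i < 4 \<Longrightarrow> (\<Sum>k\<in>K4_blocks ! i. if k < 6 then m else q) = 3 * m + q"
  by (elim less_4_cases[elim_format] disjE) (simp_all add: K4_blocks_def)

lemma card_UN_block: "finite I \<Longrightarrow> card (\<Union>k\<in>I. block m q k) = (\<Sum>k\<in>I. card (block m q k))"
  using block_disjoint by (intro card_UN_disjoint) (auto simp: block_def)

lemma K4_vertex_Int:
  "K4_vertex m q i \<inter> K4_vertex m q j = (\<Union>k\<in>K4_blocks ! i \<inter> K4_blocks ! j. block m q k)"
  unfolding K4_vertex_def using block_disjoint by (rule UN_Int_UN_disjoint)

lemma card_K4_vertex: "i < 4 \<Longrightarrow> card (K4_vertex m q i) = 3 * m + q"
  using K4_blocks_weight finite_subset[OF K4_blocks_subset]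
  by (simp add: K4_vertex_def card_UN_block card_block)

lemma K4_vertex_subset: "i < 4 \<Longrightarrow> K4_vertex m q i \<subseteq> {1..6 * m + 4 * q}"
  using K4_blocks_subset block_subset unfolding K4_vertex_def by blast

lemma card_K4_vertex_Int:
  assumes "i < 4" "j < 4" "i \<noteq> j"
  shows "card (K4_vertex m q i \<inter> K4_vertex m q j) = m"
proof -
  let ?E = "K4_blocks ! i \<inter> K4_blocks ! j"
  have "card (K4_vertex m q i \<inter> K4_vertex m q j) = (\<Sum>k\<in>?E. card (block m q k))"
    using K4_blocks_pair[OF assms] by (simp add: K4_vertex_Int card_UN_block card_ge_0_finite)
  also have "\<dots> = card ?E * m"
    using K4_blocks_pair[OF assms] by (simp add: card_block subset_iff)
  finally show ?thesis using K4_blocks_pair[OF assms] by simp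
qed

lemma K4_vertex_triple_Int:
  "i < 4 \<Longrightarrow> j < 4 \<Longrightarrow> k < 4 \<Longrightarrow> i \<noteq> j \<Longrightarrow> i \<noteq> k \<Longrightarrow> j \<noteq> k \<Longrightarrow>
    K4_vertex m q i \<inter> K4_vertex m q j \<inter> K4_vertex m q k = {}"
  by (simp add: K4_vertex_def UN_Int_UN_disjoint[OF block_disjoint] K4_blocks_triple)

lemma inj_on_K4_vertex: "0 < m \<Longrightarrow> inj_on (K4_vertex m q) {..<4}"
proof (rule inj_onI, rule ccontr)
  fix i j assume "0 < m" "i \<in> {..<4}" "j \<in> {..<4}" "K4_vertex m q i = K4_vertex m q j" "i \<noteq> j"
  then show False
    using card_K4_vertex_Int[of i j m q] card_K4_vertex[of i m q] by simp
qed

lemma card_K4_vertices: "0 < m \<Longrightarrow> card (K4_vertex m q ` {..<4}) = 4"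
  by (simp add: card_image inj_on_K4_vertex)

lemma two_packing_K4_vertices:
  assumes "0 < m" "r = 3 * m + q" "6 * m + 4 * q \<le> n" "n + m < 3 * r"
  shows "two_packing n r (K4_vertex m q ` {..<4})"
  unfolding two_packing_iff
proof (intro conjI subsetI ballI impI)
  fix u assume "u \<in> K4_vertex m q ` {..<4}"
  then show "u \<in> kneser_vertices n r"
    using card_K4_vertex K4_vertex_subset assms(2,3) by (fastforce simp: kneser_vertices_def)
next
  fix u v assume "u \<in> K4_vertex m q ` {..<4}" "v \<in> K4_vertex m q ` {..<4}" "u \<noteq> v"
  then obtain i j where "i < 4" "j < 4" "i \<noteq> j" "u = K4_vertex m q i" "v = K4_vertex m q j"
    by blast
  then show "u \<inter> v \<noteq> {}" "n + card (u \<inter> v) < 3 * r"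
    using card_K4_vertex_Int[of i j m q] assms(1,4) by auto
qed

lemma i_x_K4_vertices_le_2: "i_x (K4_vertex m q ` {..<4}) x \<le> 2"
proof (rule i_x_le_2I)
  fix u v w assume "u \<in> K4_vertex m q ` {..<4}" "v \<in> K4_vertex m q ` {..<4}"
    "w \<in> K4_vertex m q ` {..<4}" "u \<noteq> v" "u \<noteq> w" "v \<noteq> w"
  then obtain i j k where "i < 4" "j < 4" "k < 4" "i \<noteq> j" "i \<noteq> k" "j \<noteq> k"
    "u = K4_vertex m q i" "v = K4_vertex m q j" "w = K4_vertex m q k"
    by blast
  then show "x \<notin> u \<inter> v \<inter> w"
    using K4_vertex_triple_Int by blast
qed

theorem lemma4p6:
  fixes r t n :: nat
  assumes "r \<ge> 3" and "2 \<le> t" and "3 * t \<le> r + 3" and "n = 3 * r - t"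
    and "rho2 n r \<ge> 4"
  shows "\<exists>S. two_packing n r S \<and> card S = 4 \<and> (\<forall>x\<in>{1..n}. i_x S x \<le> 2)"
proof -
  have n: "n + t = 3 * r" using assms(2-4) by linarith
  obtain S0 where S0: "two_packing n r S0" "card S0 = rho2 n r"
    using rho2_attained by blast
  then obtain S where "S \<subseteq> S0" "card S = 4"
    using assms(5) by (metis obtain_subset_with_card_n)
  with S0 have "two_packing n r S" by (blast intro: two_packing_subset)
  from two_packing_card_bound[OF this] \<open>card S = 4\<close>
  have "4 * r \<le> n + 6 * (3 * r - Suc n)" by (simp add: numeral_eq_Suc)
  then have "r + 6 \<le> 5 * t" using n assms(2) by linarith
  obtain m where "t = Suc m" using assms(2) by (cases t) auto
  with n assms(2,3) \<open>r + 6 \<le> 5 * t\<close>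
  have m: "0 < m" "3 * m \<le> r" "r + 1 \<le> 5 * m" "n + m + 1 = 3 * r" by simp_all
  define q where "q = r - 3 * m"
  have r: "r = 3 * m + q" using m(2) unfolding q_def by simp
  have "two_packing n r (K4_vertex m q ` {..<4})"
    using m r by (intro two_packing_K4_vertices[where m = m and q = q]) linarith+
  then show ?thesis
    using card_K4_vertices[OF m(1)] i_x_K4_vertices_le_2 by blast
qed

end
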